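(* Let $a\in\mathcal{Z}=\prod_{p\in\mathcal{P}}\mathbb{Z}_p$. The following are equivalent: (1) $a$ is not a zero divisor in $\mathcal{Z}$; (2) $a_p\neq0$ for every $p\in\mathcal{P}$; (3) the set $\mathbb{Q}^*_+a\cap\mathcal{Z}$ is dense in $\mathcal{Z}$.
   Context: $\mathcal{P}$ is the set of primes, $\mathbb{Z}_p$ the $p$-adic integers; $\mathcal{Z}=\prod_p\mathbb{Z}_p$ is a ring under componentwise operations with the product topology, viewed inside the finite adeles $\mathcal{A}_f$, where $\mathbb{Q}^*_+$ acts by multiplication via the diagonal embedding $r\mapsto(r)_{p}$. *)

theory Defs
  imports "HOL-Analysis.Analysis" "HOL-Computational_Algebra.Primes"
begin

text \<open>p-adic integers, modelled as the inverse limit of the rings Z/p^k Z: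
  compatible sequences of residues x k in {0..<p^k} with x (Suc k) mod p^k = x k.\<close>

definition Zp :: "nat \<Rightarrow> (nat \<Rightarrow> int) set" where
  "Zp p = {x. (\<forall>k. 0 \<le> x k \<and> x k < int p ^ k) \<and> (\<forall>k. x (Suc k) mod int p ^ k = x k)}"

definition padd :: "nat \<Rightarrow> (nat \<Rightarrow> int) \<Rightarrow> (nat \<Rightarrow> int) \<Rightarrow> (nat \<Rightarrow> int)" where
  "padd p x y = (\<lambda>k. (x k + y k) mod int p ^ k)"

definition pmult :: "nat \<Rightarrow> (nat \<Rightarrow> int) \<Rightarrow> (nat \<Rightarrow> int) \<Rightarrow> (nat \<Rightarrow> int)" where
  "pmult p x y = (\<lambda>k. (x k * y k) mod int p ^ k)"

definition pscal :: "nat \<Rightarrow> int \<Rightarrow> (nat \<Rightarrow> int) \<Rightarrow> (nat \<Rightarrow> int)" where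
  "pscal p n x = (\<lambda>k. (n * x k) mod int p ^ k)"

definition pzero :: "nat \<Rightarrow> int" where
  "pzero = (\<lambda>k. 0)"

text \<open>p-adic topology = inverse limit topology = subspace of the product of discrete spaces\<close>
definition Zp_top :: "nat \<Rightarrow> (nat \<Rightarrow> int) topology" where
  "Zp_top p = subtopology (product_topology (\<lambda>k. discrete_topology (UNIV :: int set)) UNIV) (Zp p)"

definition Primes :: "nat set" where
  "Primes = {p. prime p}"

definition Zhat :: "(nat \<Rightarrow> nat \<Rightarrow> int) set" where
  "Zhat = (\<Pi>\<^sub>E p\<in>Primes. Zp p)"

definition zadd :: "(nat \<Rightarrow> nat \<Rightarrow> int) \<Rightarrow> (nat \<Rightarrow> nat \<Rightarrow> int) \<Rightarrow> (nat \<Rightarrow> nat \<Rightarrow> int)" where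
  "zadd a b = (\<lambda>p\<in>Primes. padd p (a p) (b p))"

definition zmult :: "(nat \<Rightarrow> nat \<Rightarrow> int) \<Rightarrow> (nat \<Rightarrow> nat \<Rightarrow> int) \<Rightarrow> (nat \<Rightarrow> nat \<Rightarrow> int)" where
  "zmult a b = (\<lambda>p\<in>Primes. pmult p (a p) (b p))"

definition zscal :: "int \<Rightarrow> (nat \<Rightarrow> nat \<Rightarrow> int) \<Rightarrow> (nat \<Rightarrow> nat \<Rightarrow> int)" where
  "zscal n a = (\<lambda>p\<in>Primes. pscal p n (a p))"

definition zzero :: "nat \<Rightarrow> nat \<Rightarrow> int" where
  "zzero = (\<lambda>p\<in>Primes. pzero)"

definition Zhat_top :: "(nat \<Rightarrow> nat \<Rightarrow> int) topology" where
  "Zhat_top = product_topology Zp_top Primes"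

definition zero_divisor_Zhat :: "(nat \<Rightarrow> nat \<Rightarrow> int) \<Rightarrow> bool" where
  "zero_divisor_Zhat a \<longleftrightarrow> (\<exists>b\<in>Zhat. b \<noteq> zzero \<and> zmult a b = zzero)"

text \<open>\<Q>*_+ a \<inter> \<Z>hat inside the finite adeles: b = (m/n) a with m, n positive integers,
  i.e. n b = m a (Zhat is torsion free, so b is determined by m/n and a).\<close>
definition Qpos_orbit_cap_Zhat :: "(nat \<Rightarrow> nat \<Rightarrow> int) \<Rightarrow> (nat \<Rightarrow> nat \<Rightarrow> int) set" where
  "Qpos_orbit_cap_Zhat a =
     {b\<in>Zhat. \<exists>r::rat. r > 0 \<and> zscal (snd (quotient_of r)) b = zscal (fst (quotient_of r)) a}"

end

theory Submission
  imports Defs "HOL-Number_Theory.Cong"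
begin

text \<open>Each Z_p is a torsion-free integral domain in which every nonzero element is p^v u
  with u a unit. Hence a is a zero divisor exactly when some component a_p vanishes (multiply
  by the element that is 1 at p and 0 elsewhere). If a_p = 0, every (m/n) a has p-component 0,
  so the orbit misses the open set of all b with b_p = 1 mod p. Conversely, let every
  a_p = p^(v_p) u_p be nonzero. A basic open set prescribes c_p mod p^L for the primes p of a
  finite set F. For n = prod_(p in F) p^(v_p) the element (m/n) a lies in Zhat for every
  integer m, and the Chinese remainder theorem gives m > 0 with m u_p = (n / p^(v_p)) c_p
  mod p^L, i.e. (m/n) a_p = c_p mod p^L, for all p in F.\<close>

section \<open>Integer congruences\<close>

lemma cong_cmult_left_cancel:
  fixes a b c m :: int
  assumes "c \<noteq> 0" "[c * a = c * b] (mod c * m)"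
  shows "[a = b] (mod m)"
  using assms by (simp add: cong_iff_dvd_diff flip: right_diff_distrib)

lemma prime_not_dvd_imp_coprime_power:
  "prime p \<Longrightarrow> \<not> int p dvd u \<Longrightarrow> coprime u (int p ^ k)"
  using prime_imp_coprime[of "int p" u] by (simp add: coprime_commute)

lemma multiplicity_decompose_prime_int:
  assumes "prime p" "n \<noteq> 0"
  obtains n' where "n = int p ^ multiplicity (int p) n * n'" "\<not> int p dvd n'"
proof -
  have "\<not> is_unit (int p)" using prime_gt_1_nat[OF assms(1)] by simp
  then show ?thesis using multiplicity_decompose'[of n "int p"] assms(2) that by blast
qed

lemma multiplicity_prod_prime_powers_int:
  assumes "finite F" "\<And>p. p \<in> F \<Longrightarrow> prime p" "prime q"
  shows "multiplicity (int q) (\<Prod>p\<in>F. int p ^ v p) = (if q \<in> F then v q else 0)"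
proof -
  have "(\<Prod>p\<in>F. int p ^ v p) = (\<Prod>r\<in>int ` F. r ^ v (nat r))"
    by (subst prod.reindex) (auto simp: inj_on_def)
  also have "multiplicity (int q) \<dots> = (if int q \<in> int ` F then v (nat (int q)) else 0)"
    using assms by (intro multiplicity_prod_prime_powers) auto
  finally show ?thesis by auto
qed

lemma chinese_remainder_pos_int:
  assumes "finite F" "\<And>p. p \<in> F \<Longrightarrow> prime p"
  shows "\<exists>m > 0. \<forall>p\<in>F. [m = t p] (mod int p ^ L)"
proof -
  have "coprime (p ^ L) (q ^ L)" if "p \<in> F" "q \<in> F" "p \<noteq> q" for p q
    using that assms(2) by (simp add: primes_coprime)
  then obtain x where x: "\<forall>p\<in>F. [x = nat (t p mod int p ^ L)] (mod p ^ L)"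
    using chinese_remainder_nat[OF assms(1), of "\<lambda>p. p ^ L" "\<lambda>p. nat (t p mod int p ^ L)"] by blast
  define M where "M = (\<Prod>p\<in>F. int p ^ L)"
  have "0 < M" using assms prime_gt_0_nat by (auto simp: M_def intro!: prod_pos)
  have "[int x + M = t p] (mod int p ^ L)" if p: "p \<in> F" for p
  proof -
    have "0 < int p ^ L" using assms(2)[OF p] prime_gt_0_nat by simp
    then have "[int x = t p mod int p ^ L] (mod int p ^ L)"
      using x p by (metis cong_int_iff of_nat_power int_nat_eq pos_mod_sign)
    moreover have "[M = 0] (mod int p ^ L)"
      unfolding M_def cong_0_iff using assms(1) p by (rule dvd_prodI)
    ultimately have "[int x + M = t p mod int p ^ L + 0] (mod int p ^ L)"
      by (rule cong_add)
    then show ?thesis by (simp add: cong_def)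
  qed
  moreover have "0 < int x + M" using \<open>0 < M\<close> by simp
  ultimately show ?thesis by blast
qed

lemma chinese_remainder_units_pos_int:
  assumes "finite F" "\<And>p. p \<in> F \<Longrightarrow> prime p" "\<And>p. p \<in> F \<Longrightarrow> coprime (u p) (int p ^ L)"
  shows "\<exists>m > 0. \<forall>p\<in>F. [m * u p = t p] (mod int p ^ L)"
proof -
  obtain w where w: "\<And>p. p \<in> F \<Longrightarrow> [u p * w p = 1] (mod int p ^ L)"
    using cong_solve_coprime_int[OF assms(3)] by metis
  obtain m where m: "0 < m" "\<forall>p\<in>F. [m = t p * w p] (mod int p ^ L)"
    using chinese_remainder_pos_int[OF assms(1), where t = "\<lambda>p. t p * w p" and L = L] assms(2)
    by blast
  have "[m * u p = t p] (mod int p ^ L)" if p: "p \<in> F" for p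
  proof -
    have "[m * u p = t p * (u p * w p)] (mod int p ^ L)"
      using m(2) p cong_scalar_right[of m "t p * w p" _ "u p"] by (simp add: ac_simps)
    also have "[t p * (u p * w p) = t p * 1] (mod int p ^ L)"
      using w[OF p] by (rule cong_scalar_left)
    finally show ?thesis by simp
  qed
  then show ?thesis using m(1) by blast
qed

section \<open>The rings of p-adic integers\<close>

lemma Zp_digit_nonneg: "x \<in> Zp p \<Longrightarrow> 0 \<le> x k"
  and Zp_digit_less: "x \<in> Zp p \<Longrightarrow> x k < int p ^ k"
  by (simp_all add: Zp_def)

lemma Zp_digit_mod:
  assumes "x \<in> Zp p" "j \<le> k"
  shows "x k mod int p ^ j = x j"
  using assms(2)
proof (induction k rule: dec_induct)
  case base
  then show ?case using assms(1) by (simp add: Zp_def)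
next
  case (step k)
  have "x (Suc k) mod int p ^ j = x (Suc k) mod int p ^ k mod int p ^ j"
    by (simp add: mod_mod_cancel le_imp_power_dvd step.hyps(1))
  also have "\<dots> = x j" using assms(1) step.IH by (simp add: Zp_def)
  finally show ?case .
qed

lemma Zp_digit_cong:
  "x \<in> Zp p \<Longrightarrow> j \<le> k \<Longrightarrow> [x k = x j] (mod int p ^ j)"
  by (simp add: cong_def Zp_digit_mod)

lemma Zp_digit_eqI:
  assumes "x \<in> Zp p" "y \<in> Zp p" "[x k = y k] (mod int p ^ k)"
  shows "x k = y k"
  using assms by (meson cong_less_imp_eq_int Zp_digit_nonneg Zp_digit_less)

lemma Zp_digit_eq_mono:
  assumes "x \<in> Zp p" "y \<in> Zp p" "x k = y k" "j \<le> k"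
  shows "x j = y j"
  using Zp_digit_mod[OF assms(1,4)] Zp_digit_mod[OF assms(2,4)] assms(3) by simp

lemma Zp_eq_pzeroI:
  assumes "x \<in> Zp p" "\<And>k. int p ^ k dvd x k"
  shows "x = pzero"
proof
  fix k
  have "x k = x k mod int p ^ k" using Zp_digit_mod[OF assms(1), of k k] by simp
  then show "x k = pzero k" using assms(2) by (simp add: pzero_def)
qed

lemma pzero_in_Zp: "0 < p \<Longrightarrow> pzero \<in> Zp p"
  by (simp add: Zp_def pzero_def)

lemma const_mod_in_Zp: "0 < p \<Longrightarrow> (\<lambda>k. c mod int p ^ k) \<in> Zp p"
  by (simp add: Zp_def mod_mod_cancel le_imp_power_dvd)

lemma pscal_eq_iff:
  "pscal p s x = pscal p t y \<longleftrightarrow> (\<forall>k. [s * x k = t * y k] (mod int p ^ k))"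
  by (simp add: pscal_def cong_def fun_eq_iff)

lemma pscal_in_Zp:
  assumes "0 < p" "x \<in> Zp p"
  shows "pscal p m x \<in> Zp p"
proof -
  have "[m * x (Suc k) = m * x k] (mod int p ^ k)" for k
    using Zp_digit_cong[OF assms(2)] by (simp add: cong_scalar_left)
  then show ?thesis
    using assms(1) by (simp add: Zp_def pscal_def mod_mod_cancel cong_def)
qed

lemma pscal_pscal: "pscal p a (pscal p b x) = pscal p (a * b) x"
  by (simp add: pscal_def fun_eq_iff mod_mult_right_eq mult.assoc)

lemma pscal_one: "x \<in> Zp p \<Longrightarrow> pscal p 1 x = x"
  by (simp add: pscal_def fun_eq_iff Zp_digit_mod[of x p k k for k])

lemma Zp_pscal_cancel:
  assumes "prime p" "x \<in> Zp p" "y \<in> Zp p" "g \<noteq> 0"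
    and "pscal p (g * s) x = pscal p (g * t) y"
  shows "pscal p s x = pscal p t y"
proof -
  define e where "e = multiplicity (int p) g"
  obtain g' where g: "g = int p ^ e * g'" "\<not> int p dvd g'"
    unfolding e_def using multiplicity_decompose_prime_int[OF assms(1,4)] by blast
  have "[s * x k = t * y k] (mod int p ^ k)" for k
  proof -
    have "[g * s * x (k + e) = g * t * y (k + e)] (mod int p ^ (k + e))"
      using assms(5) by (simp add: pscal_eq_iff mult.assoc)
    then have "[int p ^ e * (g' * (s * x (k + e))) = int p ^ e * (g' * (t * y (k + e)))]
            (mod int p ^ e * int p ^ k)"
      unfolding g(1) by (simp add: power_add ac_simps)
    then have "[g' * (s * x (k + e)) = g' * (t * y (k + e))] (mod int p ^ k)"
      by (rule cong_cmult_left_cancel[rotated]) (use assms(1) in simp)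
    then have "[s * x (k + e) = t * y (k + e)] (mod int p ^ k)"
      using cong_mult_lcancel prime_not_dvd_imp_coprime_power[OF assms(1) g(2)] by blast
    moreover have "[s * x (k + e) = s * x k] (mod int p ^ k)" "[t * y (k + e) = t * y k] (mod int p ^ k)"
      using Zp_digit_cong assms(2,3) by (simp_all add: cong_scalar_left)
    ultimately show ?thesis by (metis cong_sym cong_trans)
  qed
  then show ?thesis by (simp add: pscal_eq_iff)
qed

lemma Zp_exists_quotient_prime_power:
  assumes "0 < p" "x \<in> Zp p" "\<And>k. int p ^ e dvd x k"
  shows "\<exists>z\<in>Zp p. pscal p (int p ^ e) z = x"
proof
  define z where "z k = x (k + e) div int p ^ e" for k
  have x_eq: "x (k + e) = int p ^ e * z k" for k
    using assms(3) by (simp add: z_def)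
  show "pscal p (int p ^ e) z = x"
    using Zp_digit_mod[OF assms(2), of k "k + e" for k]
    by (simp add: pscal_def fun_eq_iff flip: x_eq)
  have "[int p ^ e * z (Suc k) = int p ^ e * z k] (mod int p ^ e * int p ^ k)" for k
  proof -
    have "[x (Suc k + e) = x (k + e)] (mod int p ^ (k + e))"
      by (rule Zp_digit_cong[OF assms(2)]) simp
    then show ?thesis by (simp only: x_eq power_add mult.commute[of "int p ^ k"])
  qed
  then have "[z (Suc k) = z k] (mod int p ^ k)" for k
    by (rule cong_cmult_left_cancel[rotated]) (use assms(1) in simp)
  moreover have "0 \<le> z k" for k
    using Zp_digit_nonneg[OF assms(2)] by (simp add: z_def pos_imp_zdiv_nonneg_iff assms(1))
  moreover have "z k < int p ^ k" for k
    using Zp_digit_less[OF assms(2), of "k + e"] assms(1)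
    by (simp add: x_eq power_add mult.commute[of "int p ^ k"])
  ultimately show "z \<in> Zp p"
    by (simp add: Zp_def cong_def)
qed

lemma Zp_valuation:
  assumes "0 < p" "x \<in> Zp p" "x \<noteq> pzero"
  obtains v z where "\<And>k. int p ^ v dvd x k" "z \<in> Zp p" "z 1 \<noteq> 0" "pscal p (int p ^ v) z = x"
proof -
  obtain j where "x j \<noteq> 0" using assms(3) by (auto simp: pzero_def)
  define v where "v = (LEAST j. x (Suc j) \<noteq> 0)"
  have "x 0 = 0" using Zp_digit_nonneg[OF assms(2), of 0] Zp_digit_less[OF assms(2), of 0] by simp
  with \<open>x j \<noteq> 0\<close> have "\<exists>i. x (Suc i) \<noteq> 0" by (cases j) auto
  then have x_Suc_v: "x (Suc v) \<noteq> 0"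
    unfolding v_def by (rule LeastI_ex)
  have "x v = 0"
  proof (cases v)
    case (Suc i)
    then have "\<not> x (Suc i) \<noteq> 0"
      unfolding v_def by (intro not_less_Least) (simp add: v_def)
    then show ?thesis using Suc by simp
  qed (use \<open>x 0 = 0\<close> in simp)
  have dvd: "int p ^ v dvd x k" for k
  proof (cases "v \<le> k")
    case True
    then show ?thesis using Zp_digit_mod[OF assms(2) True] \<open>x v = 0\<close> by (simp add: dvd_eq_mod_eq_0)
  next
    case False
    then have "x k = x v mod int p ^ k" using Zp_digit_mod[OF assms(2), of k v] by simp
    then show ?thesis using \<open>x v = 0\<close> by simp
  qed
  then obtain z where z: "z \<in> Zp p" "pscal p (int p ^ v) z = x"
    using Zp_exists_quotient_prime_power[OF assms(1,2)] by blast
  have "z 1 \<noteq> 0"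
  proof
    assume "z 1 = 0"
    then have "int p dvd z (Suc v)"
      using Zp_digit_mod[OF z(1), of 1 "Suc v"] by (simp add: dvd_eq_mod_eq_0)
    then have "int p ^ v * int p dvd int p ^ v * z (Suc v)" by (rule mult_dvd_mono[OF dvd_refl])
    then have "x (Suc v) = 0"
      using fun_cong[OF z(2), of "Suc v"] by (simp add: pscal_def mult.commute)
    then show False using x_Suc_v by contradiction
  qed
  with dvd z show ?thesis using that by blast
qed

lemma Zp_unit_digit_coprime:
  assumes "prime p" "z \<in> Zp p" "z 1 \<noteq> 0"
  shows "coprime (z k) (int p ^ k)"
proof (cases "k = 0")
  case False
  then have "z k mod int p ^ 1 = z 1" using Zp_digit_mod[OF assms(2), of 1 k] by simp
  then have "\<not> int p dvd z k" using assms(3) by (auto simp: dvd_eq_mod_eq_0)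
  then show ?thesis by (rule prime_not_dvd_imp_coprime_power[OF assms(1)])
qed simp

lemma Zp_no_zero_divisors:
  assumes "prime p" "x \<in> Zp p" "y \<in> Zp p" "pmult p x y = pzero"
  shows "x = pzero \<or> y = pzero"
proof (cases "x = pzero")
  case False
  then obtain v z where z: "z \<in> Zp p" "z 1 \<noteq> 0" "pscal p (int p ^ v) z = x"
    using Zp_valuation[OF prime_gt_0_nat[OF assms(1)] assms(2)] by metis
  have "y = pzero"
  proof (rule Zp_eq_pzeroI[OF assms(3)])
    fix k
    have modulus: "int p ^ (k + v) = int p ^ v * int p ^ k"
      by (simp add: power_add mult.commute)
    have "[x (k + v) = int p ^ v * z (k + v)] (mod int p ^ (k + v))"
      using fun_cong[OF z(3), of "k + v"] unfolding pscal_def by (metis cong_def mod_mod_trivial)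
    also have "[int p ^ v * z (k + v) = int p ^ v * z k] (mod int p ^ (k + v))"
      unfolding modulus using Zp_digit_cong[OF z(1), of k "k + v"] by (simp add: cong_cmult_leftI)
    finally have "[int p ^ v * z k * y (k + v) = x (k + v) * y (k + v)] (mod int p ^ (k + v))"
      by (simp add: cong_sym cong_scalar_right)
    also have "[x (k + v) * y (k + v) = 0] (mod int p ^ (k + v))"
      using assms(4) by (simp add: pmult_def pzero_def fun_eq_iff cong_def)
    finally have "[int p ^ v * (z k * y (k + v)) = int p ^ v * 0] (mod int p ^ v * int p ^ k)"
      by (simp add: modulus mult.assoc)
    then have "[z k * y (k + v) = 0] (mod int p ^ k)"
      using cong_cmult_left_cancel[of "int p ^ v"] assms(1) by (simp add: prime_gt_0_nat)
    then have "[y (k + v) = 0] (mod int p ^ k)"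
      using cong_mult_lcancel[OF Zp_unit_digit_coprime[OF assms(1) z(1,2)], where a = "y (k + v)" and b = 0] by simp
    then have "[y k = 0] (mod int p ^ k)"
      using Zp_digit_cong[OF assms(3), of k "k + v"] by (meson cong_sym cong_trans le_add1)
    then show "int p ^ k dvd y k" by (simp add: cong_0_iff)
  qed
  then show ?thesis ..
qed simp

lemma Zp_exists_quotient_unit:
  assumes "prime p" "\<not> int p dvd u" "x \<in> Zp p"
  shows "\<exists>y\<in>Zp p. pscal p u y = x"
proof -
  have unit: "coprime u (int p ^ k)" for k
    by (rule prime_not_dvd_imp_coprime_power[OF assms(1,2)])
  obtain w where w: "\<And>k. [u * w k = 1] (mod int p ^ k)"
    using cong_solve_coprime_int[OF unit] by metis
  define y where "y k = (x k * w k) mod int p ^ k" for k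
  have uy: "[u * y k = x k] (mod int p ^ k)" for k
  proof -
    have "[u * y k = x k * (u * w k)] (mod int p ^ k)"
      by (simp add: y_def cong_def mod_mult_right_eq ac_simps)
    also have "[x k * (u * w k) = x k * 1] (mod int p ^ k)"
      using w by (rule cong_scalar_left)
    finally show ?thesis by simp
  qed
  then have "pscal p u y = x"
    using Zp_digit_mod[OF assms(3)] by (simp add: pscal_def cong_def fun_eq_iff)
  have p_pos: "0 < p" using prime_gt_0_nat[OF assms(1)] .
  have "y (Suc k) mod int p ^ k = y k" for k
  proof (rule cong_less_imp_eq_int)
    have "[u * (y (Suc k) mod int p ^ k) = u * y (Suc k)] (mod int p ^ k)"
      by (simp add: cong_def mod_mult_right_eq)
    also have "[u * y (Suc k) = x (Suc k)] (mod int p ^ k)"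
      using uy[of "Suc k"] by (rule cong_dvd_mono_modulus) (simp add: le_imp_power_dvd)
    also have "[x (Suc k) = x k] (mod int p ^ k)"
      using Zp_digit_cong[OF assms(3)] by simp
    also have "[x k = u * y k] (mod int p ^ k)"
      using uy by (rule cong_sym)
    finally show "[y (Suc k) mod int p ^ k = y k] (mod int p ^ k)"
      using cong_mult_lcancel[OF unit] by blast
  qed (use p_pos in \<open>simp_all add: y_def\<close>)
  then have "y \<in> Zp p"
    using p_pos by (simp add: Zp_def y_def)
  with \<open>pscal p u y = x\<close> show ?thesis by blast
qed

lemma Zp_exists_quotient:
  assumes "prime p" "n \<noteq> 0" "x \<in> Zp p" "\<And>k. int p ^ multiplicity (int p) n dvd x k"
  shows "\<exists>y\<in>Zp p. pscal p n y = pscal p m x"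
proof -
  have p_pos: "0 < p" using prime_gt_0_nat[OF assms(1)] .
  obtain n' where n: "n = int p ^ multiplicity (int p) n * n'" "\<not> int p dvd n'"
    using multiplicity_decompose_prime_int[OF assms(1,2)] by blast
  obtain z where z: "z \<in> Zp p" "pscal p (int p ^ multiplicity (int p) n) z = x"
    using Zp_exists_quotient_prime_power[OF p_pos assms(3,4)] by blast
  obtain y where y: "y \<in> Zp p" "pscal p n' y = pscal p m z"
    using Zp_exists_quotient_unit[OF assms(1) n(2) pscal_in_Zp[OF p_pos z(1)]] by blast
  have "pscal p n y = pscal p (int p ^ multiplicity (int p) n) (pscal p n' y)"
    by (subst n(1)) (simp add: pscal_pscal)
  also have "\<dots> = pscal p m x"
    by (simp add: y(2) pscal_pscal flip: z(2)) (simp add: mult.commute)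
  finally show ?thesis using y(1) by blast
qed

lemma Zp_quotient_digit_eq:
  assumes "prime p" "y \<in> Zp p" "z \<in> Zp p" "c \<in> Zp p" "\<not> int p dvd u"
    and "pscal p (int p ^ v * u) y = pscal p m (pscal p (int p ^ v) z)"
    and "[m * z L = u * c L] (mod int p ^ L)"
  shows "y L = c L"
proof -
  have "pscal p (int p ^ v * u) y = pscal p (int p ^ v * m) z"
    using assms(6) by (simp add: pscal_pscal mult.commute)
  moreover have "int p ^ v \<noteq> 0" using prime_gt_0_nat[OF assms(1)] by simp
  ultimately have "pscal p u y = pscal p m z"
    by (rule Zp_pscal_cancel[OF assms(1-3), rotated])
  then have "[u * y L = m * z L] (mod int p ^ L)"
    by (simp add: pscal_eq_iff)
  also note assms(7)
  finally have "[y L = c L] (mod int p ^ L)"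
    using cong_mult_lcancel[OF prime_not_dvd_imp_coprime_power[OF assms(1,5)]] by simp
  then show ?thesis using Zp_digit_eqI assms(2,4) by blast
qed

section \<open>Zero divisors and the rational orbit in Zhat\<close>

lemma mem_Primes_iff [simp]: "p \<in> Primes \<longleftrightarrow> prime p"
  by (simp add: Primes_def)

lemma Zhat_component: "b \<in> Zhat \<Longrightarrow> p \<in> Primes \<Longrightarrow> b p \<in> Zp p"
  by (simp add: Zhat_def PiE_iff)

lemma zscal_eq_iff:
  "zscal s b = zscal t a \<longleftrightarrow> (\<forall>p\<in>Primes. pscal p s (b p) = pscal p t (a p))"
  by (auto simp: zscal_def fun_eq_iff restrict_def)

lemma Zhat_exists_quotient:
  assumes "a \<in> Zhat" "n \<noteq> 0" "\<And>p k. p \<in> Primes \<Longrightarrow> int p ^ multiplicity (int p) n dvd a p k"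
  shows "\<exists>b\<in>Zhat. zscal n b = zscal m a"
proof -
  have "\<exists>y\<in>Zp p. pscal p n y = pscal p m (a p)" if p: "p \<in> Primes" for p
    using Zp_exists_quotient[OF _ assms(2) Zhat_component[OF assms(1) p] assms(3)[OF p], of m] p
    by simp
  then obtain y where y: "\<And>p. p \<in> Primes \<Longrightarrow> y p \<in> Zp p \<and> pscal p n (y p) = pscal p m (a p)"
    by metis
  then have "restrict y Primes \<in> Zhat" "zscal n (restrict y Primes) = zscal m a"
    by (simp_all add: Zhat_def zscal_eq_iff)
  then show ?thesis by blast
qed

lemma Zhat_nonzero_component:
  assumes "b \<in> Zhat" "b \<noteq> zzero"
  shows "\<exists>q\<in>Primes. b q \<noteq> pzero"
proof (rule ccontr)
  assume "\<not> (\<exists>q\<in>Primes. b q \<noteq> pzero)"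
  then have "restrict b Primes = zzero" unfolding zzero_def by (intro restrict_ext) blast
  moreover have "restrict b Primes = b" using assms(1) by (simp add: Zhat_def PiE_def extensional_restrict)
  ultimately show False using assms(2) by simp
qed

definition zone :: "nat \<Rightarrow> nat \<Rightarrow> int" where
  "zone = (\<lambda>q\<in>Primes. \<lambda>k. 1 mod int q ^ k)"

lemma zone_in_Zhat: "zone \<in> Zhat"
  by (simp add: zone_def Zhat_def const_mod_in_Zp prime_gt_0_nat)

lemma zone_digit_one: "p \<in> Primes \<Longrightarrow> zone p 1 = 1"
  using prime_gt_1_nat[of p] by (simp add: zone_def)

lemma not_zero_divisor_Zhat_iff:
  assumes "a \<in> Zhat"
  shows "\<not> zero_divisor_Zhat a \<longleftrightarrow> (\<forall>p\<in>Primes. a p \<noteq> pzero)"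
proof
  assume no_zd: "\<not> zero_divisor_Zhat a"
  show "\<forall>p\<in>Primes. a p \<noteq> pzero"
  proof (intro ballI notI)
    fix p assume p: "p \<in> Primes" and "a p = pzero"
    define b where "b = (\<lambda>q\<in>Primes. if q = p then zone q else pzero)"
    have "b \<in> Zhat"
      using zone_in_Zhat by (auto simp: b_def Zhat_def pzero_in_Zp prime_gt_0_nat)
    moreover have "b \<noteq> zzero"
    proof
      assume "b = zzero"
      then have "b p 1 = zzero p 1" by simp
      then show False using p zone_digit_one by (simp add: b_def zzero_def pzero_def)
    qed
    moreover have "zmult a b = zzero"
      unfolding zmult_def zzero_def
      by (rule restrict_ext) (simp add: b_def pmult_def pzero_def \<open>a p = pzero\<close> fun_eq_iff)
    ultimately show False using no_zd by (auto simp: zero_divisor_Zhat_def)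
  qed
next
  assume nonzero: "\<forall>p\<in>Primes. a p \<noteq> pzero"
  show "\<not> zero_divisor_Zhat a"
  proof
    assume "zero_divisor_Zhat a"
    then obtain b where b: "b \<in> Zhat" "b \<noteq> zzero" "zmult a b = zzero"
      by (auto simp: zero_divisor_Zhat_def)
    then obtain q where q: "q \<in> Primes" "b q \<noteq> pzero"
      using Zhat_nonzero_component by blast
    have "pmult q (a q) (b q) = pzero"
      using fun_cong[OF b(3), of q] q(1) by (simp add: zmult_def zzero_def)
    then show False
      using Zp_no_zero_divisors Zhat_component assms b(1) q nonzero by (metis mem_Primes_iff)
  qed
qed

lemma Qpos_orbit_cap_Zhat_eq:
  assumes "a \<in> Zhat"
  shows "Qpos_orbit_cap_Zhat a = {b \<in> Zhat. \<exists>m n. 0 < m \<and> 0 < n \<and> zscal n b = zscal m a}"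
proof (intro equalityI subsetI)
  fix b assume "b \<in> Qpos_orbit_cap_Zhat a"
  then obtain r where r: "b \<in> Zhat" "0 < r" "zscal (snd (quotient_of r)) b = zscal (fst (quotient_of r)) a"
    by (auto simp: Qpos_orbit_cap_Zhat_def)
  obtain m n where mn: "quotient_of r = (m, n)" by (cases "quotient_of r")
  have "0 < n" using quotient_of_denom_pos[OF mn] .
  moreover have "0 < m"
    using r(2) quotient_of_div[OF mn] \<open>0 < n\<close> by (simp add: zero_less_divide_iff)
  ultimately show "b \<in> {b \<in> Zhat. \<exists>m n. 0 < m \<and> 0 < n \<and> zscal n b = zscal m a}"
    using r mn by auto
next
  fix b assume "b \<in> {b \<in> Zhat. \<exists>m n. 0 < m \<and> 0 < n \<and> zscal n b = zscal m a}"
  then obtain m n where b: "b \<in> Zhat" "0 < m" "0 < n" "zscal n b = zscal m a" by blast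
  define r :: rat where "r = of_int m / of_int n"
  obtain m' n' where mn': "quotient_of r = (m', n')" by (cases "quotient_of r")
  have "of_int m / of_int n = (of_int m' / of_int n' :: rat)"
    using quotient_of_div[OF mn'] by (simp add: r_def)
  then have cross: "m * n' = m' * n"
    using b(3) quotient_of_denom_pos[OF mn'] by (simp add: frac_eq_eq flip: of_int_mult)
  have "zscal n' b = zscal m' a"
    unfolding zscal_eq_iff
  proof
    fix p assume p: "p \<in> Primes"
    have "pscal p (n * n') (b p) = pscal p n' (pscal p n (b p))"
      by (simp add: pscal_pscal mult.commute)
    also have "\<dots> = pscal p (n * m') (a p)"
      using b(4) p cross by (simp add: zscal_eq_iff pscal_pscal mult.commute)
    finally show "pscal p n' (b p) = pscal p m' (a p)"
      using Zp_pscal_cancel[of p "b p" "a p" n n' m'] b(1,3) assms p Zhat_component by simp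
  qed
  moreover have "0 < r" using b(2,3) by (simp add: r_def)
  ultimately show "b \<in> Qpos_orbit_cap_Zhat a"
    using b(1) mn' by (auto simp: Qpos_orbit_cap_Zhat_def)
qed

lemma Qpos_orbit_cap_Zhat_component_pzero:
  assumes "a \<in> Zhat" "p \<in> Primes" "a p = pzero" "b \<in> Qpos_orbit_cap_Zhat a"
  shows "b p = pzero"
proof -
  obtain m n where b: "b \<in> Zhat" "0 < n" "zscal n b = zscal m a"
    using assms(4) by (auto simp: Qpos_orbit_cap_Zhat_eq[OF assms(1)])
  have "pscal p (n * 1) (b p) = pscal p (n * 0) (b p)"
    using b(3) assms(2,3) by (simp add: zscal_eq_iff pscal_def pzero_def)
  moreover have "b p \<in> Zp p" using Zhat_component[OF b(1) assms(2)] .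
  ultimately have "pscal p 1 (b p) = pscal p 0 (b p)"
    using Zp_pscal_cancel[of p "b p" "b p" n 1 0] b(2) assms(2) by simp
  then show ?thesis
    using pscal_one[OF Zhat_component[OF b(1) assms(2)]] by (simp add: pscal_def pzero_def)
qed

section \<open>Cylinder neighbourhoods in Zhat\<close>

lemma topspace_Zp_top [simp]: "topspace (Zp_top p) = Zp p"
  by (simp add: Zp_top_def)

lemma topspace_Zhat_top [simp]: "topspace Zhat_top = Zhat"
  by (simp add: Zhat_top_def Zhat_def)

lemma openin_Zhat_digit:
  assumes "p \<in> Primes"
  shows "openin Zhat_top {b \<in> Zhat. b p k = t}"
proof -
  have "continuous_map Zhat_top (Zp_top p) (\<lambda>b. b p)"
    unfolding Zhat_top_def using assms by (rule continuous_map_product_projection)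
  moreover have "continuous_map (Zp_top p) (discrete_topology UNIV) (\<lambda>x. x k)"
    unfolding Zp_top_def
    by (rule continuous_map_from_subtopology, rule continuous_map_product_projection) simp
  ultimately have "continuous_map Zhat_top (discrete_topology UNIV) (\<lambda>b. b p k)"
    using continuous_map_compose by (fastforce simp: o_def)
  then show ?thesis
    using openin_continuous_map_preimage[of Zhat_top _ _ "{t}"] by simp
qed

lemma openin_Zhat_cylinder:
  assumes "finite F" "F \<subseteq> Primes"
  shows "openin Zhat_top {b \<in> Zhat. \<forall>p\<in>F. b p K = c p K}"
proof -
  have "openin Zhat_top ((\<Inter>p\<in>F. {b \<in> Zhat. b p K = c p K}) \<inter> topspace Zhat_top)"
  proof (rule openin_INT[OF assms(1)])
    show "openin Zhat_top {b \<in> Zhat. b p K = c p K}" if "p \<in> F" for p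
      using that assms(2) by (intro openin_Zhat_digit) blast
  qed
  also have "(\<Inter>p\<in>F. {b \<in> Zhat. b p K = c p K}) \<inter> topspace Zhat_top
      = {b \<in> Zhat. \<forall>p\<in>F. b p K = c p K}"
    by auto
  finally show ?thesis .
qed

lemma Zp_open_contains_cylinder:
  assumes "openin (Zp_top p) V" "c \<in> V"
  shows "\<exists>K. {x \<in> Zp p. x K = c K} \<subseteq> V"
proof -
  obtain W where W: "openin (product_topology (\<lambda>k. discrete_topology (UNIV :: int set)) UNIV) W"
    "V = W \<inter> Zp p"
    using assms(1) unfolding Zp_top_def openin_subtopology by blast
  then have c: "c \<in> W" "c \<in> Zp p" using assms(2) by auto
  obtain Y where Y: "finite {k. Y k \<noteq> UNIV}" "c \<in> Pi\<^sub>E UNIV Y" "Pi\<^sub>E UNIV Y \<subseteq> W"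
    using W(1) c(1) unfolding openin_product_topology_alt by auto
  obtain K where K: "\<And>k. Y k \<noteq> UNIV \<Longrightarrow> k \<le> K"
    using Y(1) finite_nat_set_iff_bounded_le by auto
  have "x \<in> V" if x: "x \<in> Zp p" "x K = c K" for x
  proof -
    have "x k \<in> Y k" for k
    proof (cases "Y k = UNIV")
      case False
      then have "x k = c k" using Zp_digit_eq_mono[OF x(1) c(2) x(2) K] by blast
      then show ?thesis using Y(2) by auto
    qed simp
    then show ?thesis using Y(3) W(2) x(1) by auto
  qed
  then show ?thesis by blast
qed

lemma Zhat_open_contains_cylinder:
  assumes "openin Zhat_top U" "c \<in> U"
  shows "\<exists>F K. finite F \<and> F \<subseteq> Primes \<and> {b \<in> Zhat. \<forall>p\<in>F. b p K = c p K} \<subseteq> U"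
proof -
  obtain V where V: "finite {p \<in> Primes. V p \<noteq> Zp p}" "\<And>p. p \<in> Primes \<Longrightarrow> openin (Zp_top p) (V p)"
    "c \<in> Pi\<^sub>E Primes V" "Pi\<^sub>E Primes V \<subseteq> U"
    using assms unfolding Zhat_top_def openin_product_topology_alt by force
  define F where "F = {p \<in> Primes. V p \<noteq> Zp p}"
  have "\<exists>K. {x \<in> Zp p. x K = c p K} \<subseteq> V p" if "p \<in> F" for p
    using that V(2,3) by (intro Zp_open_contains_cylinder) (auto simp: F_def PiE_iff)
  then obtain Kp where Kp: "\<And>p. p \<in> F \<Longrightarrow> {x \<in> Zp p. x (Kp p) = c p (Kp p)} \<subseteq> V p"
    by metis
  define K where "K = Max (Kp ` F)"
  have "b \<in> U" if b: "b \<in> Zhat" "\<forall>p\<in>F. b p K = c p K" for b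
  proof -
    have "b p \<in> V p" if p: "p \<in> Primes" for p
    proof (cases "p \<in> F")
      case True
      have "c p \<in> V p" using V(3) p by (simp add: PiE_iff)
      then have "c p \<in> Zp p" using openin_subset[OF V(2)[OF p]] by auto
      moreover have "Kp p \<le> K" using V(1) True by (simp add: K_def F_def)
      ultimately have "b p (Kp p) = c p (Kp p)"
        using Zp_digit_eq_mono[OF Zhat_component[OF b(1) p]] b(2) True by blast
      then show ?thesis using Kp[OF True] Zhat_component[OF b(1) p] by blast
    next
      case False
      then show ?thesis using p Zhat_component[OF b(1) p] by (simp add: F_def)
    qed
    then have "b \<in> Pi\<^sub>E Primes V" using b(1) by (simp add: Zhat_def PiE_iff)
    then show ?thesis using V(4) by blast
  qed
  moreover have "finite F" "F \<subseteq> Primes" using V(1) by (auto simp: F_def)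
  ultimately show ?thesis by blast
qed

lemma in_closure_of_Zhat_iff:
  assumes "S \<subseteq> Zhat"
  shows "c \<in> Zhat_top closure_of S \<longleftrightarrow>
           c \<in> Zhat \<and> (\<forall>F K. finite F \<and> F \<subseteq> Primes \<longrightarrow> (\<exists>b\<in>S. \<forall>p\<in>F. b p K = c p K))"
proof
  assume c: "c \<in> Zhat_top closure_of S"
  then have "c \<in> Zhat" by (simp add: in_closure_of)
  moreover have "\<exists>b\<in>S. \<forall>p\<in>F. b p K = c p K" if F: "finite F" "F \<subseteq> Primes" for F K
  proof -
    let ?C = "{b \<in> Zhat. \<forall>p\<in>F. b p K = c p K}"
    have closure: "\<forall>T. c \<in> T \<and> openin Zhat_top T \<longrightarrow> (\<exists>y. y \<in> S \<and> y \<in> T)"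
      using c unfolding in_closure_of by (rule conjunct2)
    have "c \<in> ?C \<and> openin Zhat_top ?C"
      using \<open>c \<in> Zhat\<close> openin_Zhat_cylinder[OF F] by simp
    then have "\<exists>y. y \<in> S \<and> y \<in> ?C"
      by (rule closure[rule_format])
    then show ?thesis by auto
  qed
  ultimately show "c \<in> Zhat \<and> (\<forall>F K. finite F \<and> F \<subseteq> Primes \<longrightarrow> (\<exists>b\<in>S. \<forall>p\<in>F. b p K = c p K))"
    by blast
next
  assume c: "c \<in> Zhat \<and> (\<forall>F K. finite F \<and> F \<subseteq> Primes \<longrightarrow> (\<exists>b\<in>S. \<forall>p\<in>F. b p K = c p K))"
  show "c \<in> Zhat_top closure_of S"
    unfolding in_closure_of
  proof (intro conjI allI impI)
    show "c \<in> topspace Zhat_top" using c by simp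
    fix T assume T: "c \<in> T \<and> openin Zhat_top T"
    then have "\<exists>F K. finite F \<and> F \<subseteq> Primes \<and> {b \<in> Zhat. \<forall>p\<in>F. b p K = c p K} \<subseteq> T"
      by (intro Zhat_open_contains_cylinder) simp_all
    then obtain F K where F: "finite F" "F \<subseteq> Primes"
      and cylinder: "{b \<in> Zhat. \<forall>p\<in>F. b p K = c p K} \<subseteq> T"
      by (elim exE conjE)
    obtain b where b: "b \<in> S" "\<forall>p\<in>F. b p K = c p K"
      using c F by (elim conjE allE impE bexE) simp_all
    then have "b \<in> T" using cylinder assms by auto
    with b(1) show "\<exists>y. y \<in> S \<and> y \<in> T" by (intro exI conjI)
  qed
qed

lemma Zhat_dense_iff:
  assumes "S \<subseteq> Zhat"
  shows "Zhat_top closure_of S = topspace Zhat_top \<longleftrightarrow>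
           (\<forall>c\<in>Zhat. \<forall>F K. finite F \<and> F \<subseteq> Primes \<longrightarrow> (\<exists>b\<in>S. \<forall>p\<in>F. b p K = c p K))"
proof -
  have "Zhat_top closure_of S = topspace Zhat_top \<longleftrightarrow> Zhat \<subseteq> Zhat_top closure_of S"
    using closure_of_subset_topspace[of Zhat_top S] by auto
  then show ?thesis
    unfolding subset_iff in_closure_of_Zhat_iff[OF assms] by blast
qed

section \<open>Density of the rational orbit\<close>

lemma Qpos_orbit_cap_Zhat_approx:
  assumes a: "a \<in> Zhat" "\<forall>p\<in>Primes. a p \<noteq> pzero"
    and c: "c \<in> Zhat" and F: "finite F" "F \<subseteq> Primes"
  shows "\<exists>b\<in>Qpos_orbit_cap_Zhat a. \<forall>p\<in>F. b p L = c p L"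
proof -
  have "\<exists>v z. (\<forall>k. int p ^ v dvd a p k) \<and> z \<in> Zp p \<and> z 1 \<noteq> 0 \<and> pscal p (int p ^ v) z = a p"
    if p: "p \<in> Primes" for p
    using Zp_valuation[OF _ Zhat_component[OF a(1) p]] a(2) p prime_gt_0_nat by (metis mem_Primes_iff)
  then obtain v z where v: "\<And>p k. p \<in> Primes \<Longrightarrow> int p ^ v p dvd a p k"
    and z: "\<And>p. p \<in> Primes \<Longrightarrow> z p \<in> Zp p" "\<And>p. p \<in> Primes \<Longrightarrow> z p 1 \<noteq> 0"
    and a_eq: "\<And>p. p \<in> Primes \<Longrightarrow> pscal p (int p ^ v p) (z p) = a p"
    by metis
  have F_prime: "\<And>p. p \<in> F \<Longrightarrow> prime p"
    using F(2) by auto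
  define n where "n = (\<Prod>p\<in>F. int p ^ v p)"
  have "0 < n" unfolding n_def using F_prime by (intro prod_pos) (simp add: prime_gt_0_nat)
  then have "n \<noteq> 0" by simp
  have mult_n: "multiplicity (int q) n = (if q \<in> F then v q else 0)" if "prime q" for q
    unfolding n_def using multiplicity_prod_prime_powers_int[OF F(1) F_prime that] .
  have "\<exists>n'. n = int p ^ v p * n' \<and> \<not> int p dvd n'" if p: "p \<in> F" for p
  proof -
    obtain n' where "n = int p ^ multiplicity (int p) n * n'" "\<not> int p dvd n'"
      using multiplicity_decompose_prime_int[OF F_prime[OF p] \<open>n \<noteq> 0\<close>] by blast
    then show ?thesis using mult_n[OF F_prime[OF p]] p by auto
  qed
  then obtain n' where n': "\<And>p. p \<in> F \<Longrightarrow> n = int p ^ v p * n' p" "\<And>p. p \<in> F \<Longrightarrow> \<not> int p dvd n' p"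
    by metis
  have z_coprime: "\<And>p. p \<in> F \<Longrightarrow> coprime (z p L) (int p ^ L)"
    using F(2) z by (intro Zp_unit_digit_coprime) auto
  obtain m where m: "0 < m" "\<forall>p\<in>F. [m * z p L = n' p * c p L] (mod int p ^ L)"
    using chinese_remainder_units_pos_int[OF F(1) F_prime z_coprime, where t = "\<lambda>p. n' p * c p L"]
    by blast
  have "int p ^ multiplicity (int p) n dvd a p k" if "p \<in> Primes" for p k
    using v[OF that, of k] mult_n that by auto
  then obtain b where b: "b \<in> Zhat" "zscal n b = zscal m a"
    using Zhat_exists_quotient[OF a(1) \<open>n \<noteq> 0\<close>] by blast
  with \<open>0 < n\<close> m(1) have "b \<in> Qpos_orbit_cap_Zhat a"
    unfolding Qpos_orbit_cap_Zhat_eq[OF a(1)] by blast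
  moreover have "b p L = c p L" if p: "p \<in> F" for p
  proof (rule Zp_quotient_digit_eq[where u = "n' p" and v = "v p" and m = m and z = "z p"])
    have pP: "p \<in> Primes" using p F(2) by blast
    show "pscal p (int p ^ v p * n' p) (b p) = pscal p m (pscal p (int p ^ v p) (z p))"
      using b(2) pP a_eq[OF pP] n'(1)[OF p] by (simp add: zscal_eq_iff)
  qed (use p F(2) n'(2) m(2) b(1) c z(1) Zhat_component in auto)
  ultimately show ?thesis by blast
qed

lemma Qpos_orbit_cap_Zhat_dense_iff:
  assumes "a \<in> Zhat"
  shows "Zhat_top closure_of (Qpos_orbit_cap_Zhat a) = topspace Zhat_top \<longleftrightarrow>
           (\<forall>p\<in>Primes. a p \<noteq> pzero)"
proof -
  have "Qpos_orbit_cap_Zhat a \<subseteq> Zhat" by (auto simp: Qpos_orbit_cap_Zhat_def)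
  note dense_iff = Zhat_dense_iff[OF this]
  show ?thesis
  proof
    assume dense: "Zhat_top closure_of (Qpos_orbit_cap_Zhat a) = topspace Zhat_top"
    show "\<forall>p\<in>Primes. a p \<noteq> pzero"
    proof (intro ballI notI)
      fix p assume p: "p \<in> Primes" "a p = pzero"
      obtain b where b: "b \<in> Qpos_orbit_cap_Zhat a" "b p 1 = zone p 1"
        using dense zone_in_Zhat p(1)
        unfolding dense_iff by (elim ballE allE[of _ "{p}"] allE[of _ 1]) auto
      have "b p = pzero" using Qpos_orbit_cap_Zhat_component_pzero[OF assms p b(1)] .
      then show False using b(2) zone_digit_one[OF p(1)] by (simp add: pzero_def)
    qed
  next
    assume "\<forall>p\<in>Primes. a p \<noteq> pzero"
    then show "Zhat_top closure_of (Qpos_orbit_cap_Zhat a) = topspace Zhat_top"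
      unfolding dense_iff using Qpos_orbit_cap_Zhat_approx assms by blast
  qed
qed

theorem lemma2p9:
  assumes "a \<in> Zhat"
  shows "(\<not> zero_divisor_Zhat a \<longleftrightarrow> (\<forall>p\<in>Primes. a p \<noteq> pzero))
       \<and> ((\<forall>p\<in>Primes. a p \<noteq> pzero) \<longleftrightarrow>
            Zhat_top closure_of (Qpos_orbit_cap_Zhat a) = topspace Zhat_top)"
  using not_zero_divisor_Zhat_iff[OF assms] Qpos_orbit_cap_Zhat_dense_iff[OF assms] by blast

end
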